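(* Let $m\ge 1$ and let \[ A=\begin{pmatrix} D & p\\ q^{T} & \delta\end{pmatrix}\in\mathbb{C}^{(m+1)\times(m+1)}, \] where $D=\operatorname{diag}(d_1,\ldots,d_m)$, $p,q\in\mathbb{C}^m$, $\delta\in\mathbb{C}$, and suppose $A$ is similar to $\Lambda=\operatorname{diag}(\lambda_1,\ldots,\lambda_{m+1})$, where the numbers $d_1,\ldots,d_m,\lambda_1,\ldots,\lambda_{m+1}$ are pairwise distinct. Define \[ Z^{-1}=\begin{bmatrix}-\operatorname{diag}(p)\operatorname{Cauchy}(D,\Lambda)\\ \mathbf{ones}\end{bmatrix},\qquad \Pi=-\operatorname{Cauchy}(\Lambda,D)\operatorname{diag}(q)\operatorname{diag}(p)\operatorname{Cauchy}(D,\Lambda)+\mathbf{ones}, \] where in $Z^{-1}$ the symbol $\mathbf{ones}$ is the $1\times(m+1)$ row of ones and in $\Pi$ it is the $(m+1)\times(m+1)$ all-ones matrix. Then $\Pi$ is diagonal, with $\Pi_{ij}=0$ for $i\ne j$ and \[ \Pi_{jj}=1+\sum_{i=1}^m\frac{p_iq_i}{(\lambda_j-d_i)^2}=1-\sum_{i=1}^m\frac{\prod_{k=1}^{m+1}(d_i-\lambda_k)}{(\lambda_j-d_i)^2\prod_{k\ne i}(d_i-d_k)} \] (so $\Pi$ depends only on the $d_i$ and $\lambda_j$, not on $p,q$); the matrix $Z^{-1}$ is invertible with inverse \[ Z=\Pi^{-1}\bigl[\operatorname{Cauchy}(\Lambda,D)\operatorname{diag}(q),\ \mathbf{ones}\bigr]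 \] (here $\mathbf{ones}$ is the $(m+1)\times 1$ column of ones), and $A=Z^{-1}\Lambda Z$.
   Context: For diagonal matrices $D=\operatorname{diag}(d_1,\ldots,d_m)$ and $\Lambda=\operatorname{diag}(\lambda_1,\ldots,\lambda_{m+1})$ with $d_i\neq\lambda_j$, $\operatorname{Cauchy}(D,\Lambda)$ is the $m\times(m+1)$ matrix with entries $\operatorname{Cauchy}(D,\Lambda)_{ij}=(d_i-\lambda_j)^{-1}$, and $\operatorname{Cauchy}(\Lambda,D)$ is the $(m+1)\times m$ matrix with entries $(\lambda_i-d_j)^{-1}$. For a vector $v$, $\operatorname{diag}(v)$ is the diagonal matrix with diagonal $v$. $\mathbf{ones}$ denotes an array all of whose entries are $1$, of the shape indicated. *)

theory Defs
  imports Complex_Main "Jordan_Normal_Form.Matrix"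
begin

(* Indices are 0-based: d i for i < m, lam j for j < m+1. *)

definition cauchy_mat :: "nat \<Rightarrow> nat \<Rightarrow> (nat \<Rightarrow> complex) \<Rightarrow> (nat \<Rightarrow> complex) \<Rightarrow> complex mat" where
  "cauchy_mat r c x y = mat r c (\<lambda>(i,j). 1 / (x i - y j))"

definition ones_mat :: "nat \<Rightarrow> nat \<Rightarrow> complex mat" where
  "ones_mat r c = mat r c (\<lambda>_. 1)"

definition stack_rows :: "'a mat \<Rightarrow> 'a mat \<Rightarrow> 'a mat" where
  "stack_rows X Y = mat (dim_row X + dim_row Y) (dim_col X)
     (\<lambda>(i,j). if i < dim_row X then X $$ (i,j) else Y $$ (i - dim_row X, j))"

definition stack_cols :: "'a mat \<Rightarrow> 'a mat \<Rightarrow> 'a mat" where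
  "stack_cols X Y = mat (dim_row X) (dim_col X + dim_col Y)
     (\<lambda>(i,j). if j < dim_col X then X $$ (i,j) else Y $$ (i, j - dim_col X))"

end

theory Submission
  imports Defs "Jordan_Normal_Form.Determinant" "HOL-Computational_Algebra.Polynomial"
begin

(*
  Every right eigenvector of the arrowhead matrix A for an eigenvalue \<lambda> \<notin> {d_i} is determined
  by its last entry: its first m rows read (d_i - \<lambda>) x_i + p_i x_m = 0.  Hence an eigenvector
  matrix P (AP = P\<Lambda>) equals Z\<^sup>-\<^sup>1 diag(a), and dually the matching left eigenvector
  matrix Q = P\<^sup>-\<^sup>1 equals diag(b) W with W = [Cauchy(\<Lambda>,D) diag(q), ones].  Then
  I = QP = diag(b) \<Pi> diag(a) with \<Pi> = W Z\<^sup>-\<^sup>1, so \<Pi> is diagonal and invertible,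
  \<Pi>\<^sup>-\<^sup>1 W inverts Z\<^sup>-\<^sup>1, and A Z\<^sup>-\<^sup>1 = Z\<^sup>-\<^sup>1 \<Lambda>.
  The last row of the latter identity is the secular equation
  \<Sum>_i p_i q_i / (\<lambda>_j - d_i) = \<lambda>_j - \<delta>; multiplied by \<Prod>_k (x - d_k) it becomes a
  monic polynomial identity of degree m+1 vanishing at all \<lambda>_j, so it equals \<Prod>_k (x - \<lambda>_k),
  and evaluating at d_i expresses p_i q_i through the d's and \<lambda>'s alone.
*)

lemma index_mult_mat_sum:
  assumes "A \<in> carrier_mat n k" "B \<in> carrier_mat k n'" "i < n" "j < n'"
  shows "(A * B) $$ (i,j) = (\<Sum>l<k. A $$ (i,l) * B $$ (l,j))"
  using assms by (auto simp: scalar_prod_def atLeast0LessThan intro!: sum.cong)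

lemma invertible_mat_if_right_inverse:
  fixes A :: "'a::field mat"
  assumes "A \<in> carrier_mat n n" "B \<in> carrier_mat n n" "A * B = 1\<^sub>m n"
  shows "invertible_mat A"
  using assms mat_mult_left_right_inverse[OF assms]
  unfolding invertible_mat_def inverts_mat_def by (intro conjI exI[of _ B]) auto

lemma mat_diag_mult_inverse:
  fixes c :: "nat \<Rightarrow> 'a::field"
  assumes "\<forall>j<n. c j \<noteq> 0"
  shows "mat_diag n c * mat_diag n (\<lambda>j. inverse (c j)) = 1\<^sub>m n"
    and "mat_diag n (\<lambda>j. inverse (c j)) * mat_diag n c = 1\<^sub>m n"
  unfolding mat_diag_diag using assms by (auto simp: mat_diag_def intro!: eq_matI)

lemma diag_sandwich_eq_one:
  fixes M :: "'a::field mat"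
  assumes M: "M \<in> carrier_mat n n" and eq: "mat_diag n b * M * mat_diag n a = 1\<^sub>m n"
  shows "M = mat_diag n (\<lambda>j. inverse (a j * b j))" and "\<forall>j<n. a j \<noteq> 0 \<and> b j \<noteq> 0"
proof -
  have entry: "b j * M $$ (j,k) * a k = (if j = k then 1 else 0)" if "j < n" "k < n" for j k
    using arg_cong[OF eq, of "\<lambda>X. X $$ (j,k)"] that M
    by (simp add: mat_diag_mult_left[of _ n n] mat_diag_mult_right[of _ n n])
  show nz: "\<forall>j<n. a j \<noteq> 0 \<and> b j \<noteq> 0"
    using entry by (metis mult_not_zero zero_neq_one)
  show "M = mat_diag n (\<lambda>j. inverse (a j * b j))"
  proof (rule eq_matI)
    fix j k assume "j < dim_row (mat_diag n (\<lambda>j. inverse (a j * b j)))"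
      "k < dim_col (mat_diag n (\<lambda>j. inverse (a j * b j)))"
    then have jk: "j < n" "k < n" by (auto simp: mat_diag_def)
    with entry[OF jk] nz show "M $$ (j,k) = mat_diag n (\<lambda>j. inverse (a j * b j)) $$ (j,k)"
      by (auto simp: mat_diag_def field_simps)
  qed (use M in \<open>auto simp: mat_diag_def\<close>)
qed

lemma similar_of_eigvec_basis:
  fixes A :: "'a::field mat"
  assumes A: "A \<in> carrier_mat n n" and X: "X \<in> carrier_mat n n" and Y: "Y \<in> carrier_mat n n"
    and AX: "A * X = X * L" and XY: "X * Y = 1\<^sub>m n"
  shows "A = X * L * Y"
proof -
  have "A = A * (X * Y)" using A XY by simp
  also have "\<dots> = A * X * Y" using A X Y by (simp add: assoc_mult_mat)
  finally show ?thesis unfolding AX .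
qed

lemma eigvecs_mult_mat_diag_cancel:
  fixes A :: "'a::field mat"
  assumes A: "A \<in> carrier_mat n n" and X: "X \<in> carrier_mat n n"
    and eig: "A * (X * mat_diag n a) = X * mat_diag n a * mat_diag n lam" and a: "\<forall>j<n. a j \<noteq> 0"
  shows "A * X = X * mat_diag n lam"
proof -
  let ?Da = "mat_diag n a" and ?Di = "mat_diag n (\<lambda>j. inverse (a j))" and ?L = "mat_diag n lam"
  have "X = X * (?Da * ?Di)"
    using X mat_diag_mult_inverse(1)[OF a] by simp
  also have "\<dots> = X * ?Da * ?Di"
    by (rule assoc_mult_mat[OF X mat_diag_dim mat_diag_dim, symmetric])
  finally have "A * X = A * (X * ?Da) * ?Di"
    using assoc_mult_mat[OF A mult_carrier_mat[OF X mat_diag_dim] mat_diag_dim] by simp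
  also have "\<dots> = X * (?Da * ?L) * ?Di"
    unfolding eig assoc_mult_mat[OF X mat_diag_dim mat_diag_dim] ..
  also have "\<dots> = X * (?Da * ?L * ?Di)"
    by (rule assoc_mult_mat[OF X mult_carrier_mat[OF mat_diag_dim mat_diag_dim] mat_diag_dim])
  also have "?Da * ?L * ?Di = ?L"
    unfolding mat_diag_diag using a by (auto simp: mat_diag_def intro!: eq_matI)
  finally show ?thesis .
qed

lemma secular_equation_poly:
  fixes d lam c :: "nat \<Rightarrow> 'a::field" and \<delta> :: 'a
  assumes inj_lam: "inj_on lam {..<m+1}"
    and d_lam: "\<forall>i<m. \<forall>j<m+1. d i \<noteq> lam j"
    and secular: "\<And>j. j < m+1 \<Longrightarrow> (\<Sum>i<m. c i / (lam j - d i)) = lam j - \<delta>"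
  shows "[:-\<delta>, 1:] * (\<Prod>k<m. [:-d k, 1:]) - (\<Sum>l<m. smult (c l) (\<Prod>k\<in>{..<m}-{l}. [:-d k, 1:]))
         = (\<Prod>k<m+1. [:-lam k, 1:])"
    (is "?G = ?L")
proof (rule poly_eqI_degree_lead_coeff[of _ "m+1" _ "lam ` {..<m+1}"])
  let ?Qd = "\<Prod>k<m. [:-d k, 1:]"
  let ?S = "\<Sum>l<m. smult (c l) (\<Prod>k\<in>{..<m}-{l}. [:-d k, 1:])"
  have lc_Qd: "lead_coeff ?Qd = 1"
    by (simp add: lead_coeff_prod)
  have deg_Qd: "degree ?Qd = m"
    by (simp add: degree_prod_eq_sum_degree)
  with lc_Qd have deg_lin_Qd: "degree ([:-\<delta>, 1:] * ?Qd) = m+1"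
    by (subst degree_mult_eq) auto
  have "degree (\<Prod>k\<in>{..<m}-{l}. [:-d k, 1:]) \<le> m" for l
    by (simp add: degree_prod_eq_sum_degree card_Diff1_le[of "{..<m}", simplified])
  then have deg_S: "degree ?S \<le> m"
    by (intro degree_sum_le) (auto intro: order_trans[OF degree_smult_le])
  show "degree ?G \<le> m+1"
    using deg_lin_Qd deg_S by (intro degree_diff_le) auto
  have deg_L: "degree ?L = m+1"
    by (subst degree_prod_eq_sum_degree) auto
  then show "degree ?L \<le> m+1" by simp
  have "coeff ([:-\<delta>, 1:] * ?Qd) (m+1) = 1"
    using lead_coeff_mult[of "[:-\<delta>, 1:]" ?Qd] deg_lin_Qd lc_Qd by simp
  moreover have "coeff ?S (m+1) = 0"
    using deg_S by (intro coeff_eq_0) auto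
  moreover have "lead_coeff ?L = 1"
    by (simp only: lead_coeff_prod) simp
  then have "coeff ?L (m+1) = 1"
    by (simp only: deg_L)
  ultimately show "coeff ?G (m+1) = coeff ?L (m+1)" by simp
  show "m+1 \<le> card (lam ` {..<m+1})"
    using inj_lam by (simp add: card_image)
  fix z assume "z \<in> lam ` {..<m+1}"
  then obtain j where j: "j < m+1" and z: "z = lam j" by auto
  define Q where "Q = (\<Prod>k<m. lam j - d k)"
  have Q_remove: "(\<Prod>k\<in>{..<m}-{l}. lam j - d k) = Q / (lam j - d l)" if l: "l < m" for l
  proof -
    have "Q = (lam j - d l) * (\<Prod>k\<in>{..<m}-{l}. lam j - d k)"
      unfolding Q_def using l by (subst prod.remove[of _ l]) auto
    moreover have "lam j - d l \<noteq> 0" using d_lam l j by (metis eq_iff_diff_eq_0)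
    ultimately show ?thesis by (simp add: field_simps)
  qed
  have "poly ?G z = (lam j - \<delta>) * Q - (\<Sum>l<m. c l * (Q / (lam j - d l)))"
    unfolding z Q_def poly_diff poly_mult poly_sum poly_smult poly_prod
    using Q_remove unfolding Q_def by (auto intro!: sum.cong)
  also have "\<dots> = Q * ((lam j - \<delta>) - (\<Sum>l<m. c l / (lam j - d l)))"
    by (simp add: algebra_simps sum_distrib_left)
  also have "\<dots> = 0" using secular[OF j] by simp
  also have "0 = poly ?L z"
    unfolding z poly_prod using j by (auto intro!: bexI[of _ j] simp del: prod.lessThan_Suc)
  finally show "poly ?G z = poly ?L z" .
qed

lemma secular_equation_residue:
  fixes d lam c :: "nat \<Rightarrow> 'a::field" and \<delta> :: 'a
  assumes inj_d: "inj_on d {..<m}" and inj_lam: "inj_on lam {..<m+1}"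
    and d_lam: "\<forall>i<m. \<forall>j<m+1. d i \<noteq> lam j"
    and secular: "\<And>j. j < m+1 \<Longrightarrow> (\<Sum>i<m. c i / (lam j - d i)) = lam j - \<delta>"
    and i: "i < m"
  shows "c i = - (\<Prod>k<m+1. d i - lam k) / (\<Prod>k\<in>{..<m}-{i}. d i - d k)"
proof -
  let ?Qd = "\<Prod>k<m. [:-d k, 1:]"
  let ?S = "\<Sum>l<m. smult (c l) (\<Prod>k\<in>{..<m}-{l}. [:-d k, 1:])"
  have "poly ?Qd (d i) = 0"
    using i by (auto simp: poly_prod intro!: bexI[of _ i])
  moreover have "poly ?S (d i) = c i * (\<Prod>k\<in>{..<m}-{i}. d i - d k)"
    unfolding poly_sum poly_smult poly_prod
    using i by (subst sum.remove[of _ i]) (auto intro!: sum.neutral bexI[of _ i])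
  ultimately have "- (c i * (\<Prod>k\<in>{..<m}-{i}. d i - d k)) = poly ([:-\<delta>, 1:] * ?Qd - ?S) (d i)"
    by (simp only: poly_diff poly_mult) simp
  also have "\<dots> = poly (\<Prod>k<m+1. [:-lam k, 1:]) (d i)"
    by (rule arg_cong[OF secular_equation_poly[OF inj_lam d_lam secular]])
  also have "\<dots> = (\<Prod>k<m+1. d i - lam k)"
    by (simp only: poly_prod) simp
  finally have "- (c i * (\<Prod>k\<in>{..<m}-{i}. d i - d k)) = (\<Prod>k<m+1. d i - lam k)" .
  moreover have "(\<Prod>k\<in>{..<m}-{i}. d i - d k) \<noteq> 0"
    using inj_d i by (auto simp: inj_on_def)
  ultimately show ?thesis by (simp add: field_simps)
qed

abbreviation arrowhead_mat :: "nat \<Rightarrow> (nat \<Rightarrow> 'a::zero) \<Rightarrow> (nat \<Rightarrow> 'a) \<Rightarrow> (nat \<Rightarrow> 'a) \<Rightarrow> 'a \<Rightarrow> 'a mat" where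
  "arrowhead_mat m d p q \<delta> \<equiv> four_block_mat (mat_diag m d) (mat m 1 (\<lambda>(i,_). p i))
     (mat 1 m (\<lambda>(_,j). q j)) (mat 1 1 (\<lambda>_. \<delta>))"

abbreviation arrowhead_Zinv :: "nat \<Rightarrow> (nat \<Rightarrow> complex) \<Rightarrow> (nat \<Rightarrow> complex) \<Rightarrow> (nat \<Rightarrow> complex) \<Rightarrow> complex mat" where
  "arrowhead_Zinv m d lam p \<equiv>
     stack_rows (- (mat_diag m p * cauchy_mat m (m+1) d lam)) (ones_mat 1 (m+1))"

abbreviation arrowhead_W :: "nat \<Rightarrow> (nat \<Rightarrow> complex) \<Rightarrow> (nat \<Rightarrow> complex) \<Rightarrow> (nat \<Rightarrow> complex) \<Rightarrow> complex mat" where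
  "arrowhead_W m d lam q \<equiv> stack_cols (cauchy_mat (m+1) m lam d * mat_diag m q) (ones_mat (m+1) 1)"

abbreviation arrowhead_Pi ::
  "nat \<Rightarrow> (nat \<Rightarrow> complex) \<Rightarrow> (nat \<Rightarrow> complex) \<Rightarrow> (nat \<Rightarrow> complex) \<Rightarrow> (nat \<Rightarrow> complex) \<Rightarrow> complex mat" where
  "arrowhead_Pi m d lam p q \<equiv>
     - (cauchy_mat (m+1) m lam d * mat_diag m q * mat_diag m p * cauchy_mat m (m+1) d lam)
     + ones_mat (m+1) (m+1)"

lemma arrowhead_mat_carrier: "arrowhead_mat m d p q \<delta> \<in> carrier_mat (m+1) (m+1)"
  by (rule four_block_carrier_mat) auto

lemma arrowhead_Zinv_index:
  assumes "i < m+1" "k < m+1"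
  shows "arrowhead_Zinv m d lam p $$ (i,k) = (if i < m then - p i / (d i - lam k) else 1)"
  using assms
  by (auto simp: stack_rows_def mat_diag_mult_left[of _ m "m+1"] cauchy_mat_def ones_mat_def)

lemma arrowhead_Zinv_carrier: "arrowhead_Zinv m d lam p \<in> carrier_mat (m+1) (m+1)"
  by (auto simp: stack_rows_def cauchy_mat_def ones_mat_def mat_diag_def)

lemma arrowhead_W_index:
  assumes "j < m+1" "i < m+1"
  shows "arrowhead_W m d lam q $$ (j,i) = (if i < m then q i / (lam j - d i) else 1)"
  using assms
  by (auto simp: stack_cols_def mat_diag_mult_right[of _ "m+1" m] cauchy_mat_def ones_mat_def)

lemma arrowhead_W_carrier: "arrowhead_W m d lam q \<in> carrier_mat (m+1) (m+1)"
  by (auto simp: stack_cols_def cauchy_mat_def ones_mat_def mat_diag_def)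

lemma arrowhead_Pi_carrier: "arrowhead_Pi m d lam p q \<in> carrier_mat (m+1) (m+1)"
  by (auto simp: ones_mat_def)

lemma arrowhead_Pi_index:
  assumes "j < m+1" "k < m+1"
  shows "arrowhead_Pi m d lam p q $$ (j,k) = 1 + (\<Sum>i<m. q i / (lam j - d i) * (- p i / (d i - lam k)))"
proof -
  have "cauchy_mat (m+1) m lam d * mat_diag m q * mat_diag m p
     = cauchy_mat (m+1) m lam d * (mat_diag m q * mat_diag m p)"
    by (rule assoc_mult_mat[of _ "m+1" m _ m _ m]) (auto simp: cauchy_mat_def)
  also have "\<dots> = mat (m+1) m (\<lambda>(j,i). q i * p i / (lam j - d i))"
    unfolding mat_diag_diag by (subst mat_diag_mult_right[of _ "m+1"]) (auto simp: cauchy_mat_def)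
  finally have CQP: "cauchy_mat (m+1) m lam d * mat_diag m q * mat_diag m p
     = mat (m+1) m (\<lambda>(j,i). q i * p i / (lam j - d i))" .
  have "(\<Sum>i<m. q i / (lam j - d i) * (- p i / (d i - lam k)))
      = - (\<Sum>i<m. q i * p i / (lam j - d i) * (1 / (d i - lam k)))"
    unfolding sum_negf[symmetric] by (rule sum.cong) (auto simp: divide_inverse algebra_simps)
  with CQP show ?thesis
    using assms by (simp add: cauchy_mat_def ones_mat_def scalar_prod_def atLeast0LessThan)
qed

lemma arrowhead_Pi_eq_W_Zinv: "arrowhead_Pi m d lam p q = arrowhead_W m d lam q * arrowhead_Zinv m d lam p"
proof -
  let ?W = "arrowhead_W m d lam q" and ?Z = "arrowhead_Zinv m d lam p"
  have W: "?W \<in> carrier_mat (m+1) (m+1)" and Z: "?Z \<in> carrier_mat (m+1) (m+1)"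
    by (rule arrowhead_W_carrier arrowhead_Zinv_carrier)+
  have "(?W * ?Z) $$ (j,k) = arrowhead_Pi m d lam p q $$ (j,k)" if jk: "j < m+1" "k < m+1" for j k
  proof -
    have "(?W * ?Z) $$ (j,k) = (\<Sum>l<m+1. ?W $$ (j,l) * ?Z $$ (l,k))"
      by (rule index_mult_mat_sum[OF W Z jk])
    also have "\<dots> = 1 + (\<Sum>i<m. q i / (lam j - d i) * (- p i / (d i - lam k)))"
      using arrowhead_W_index[OF jk(1)] arrowhead_Zinv_index[OF _ jk(2)] by simp
    finally show ?thesis
      unfolding arrowhead_Pi_index[OF jk] .
  qed
  then show ?thesis
    using W Z arrowhead_Pi_carrier[of m lam d q p] by (intro eq_matI) auto
qed

lemma arrowhead_mat_mult_index:
  fixes d p q :: "nat \<Rightarrow> 'a::comm_ring_1"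
  assumes X: "X \<in> carrier_mat (m+1) n" and j: "j < n"
  shows "i < m \<Longrightarrow> (arrowhead_mat m d p q \<delta> * X) $$ (i,j) = d i * X $$ (i,j) + p i * X $$ (m,j)"
    and "(arrowhead_mat m d p q \<delta> * X) $$ (m,j) = (\<Sum>l<m. q l * X $$ (l,j)) + \<delta> * X $$ (m,j)"
proof -
  have prod: "(arrowhead_mat m d p q \<delta> * X) $$ (i,j)
      = (\<Sum>l<m. arrowhead_mat m d p q \<delta> $$ (i,l) * X $$ (l,j)) + arrowhead_mat m d p q \<delta> $$ (i,m) * X $$ (m,j)"
    if "i < m+1" for i
    using index_mult_mat_sum[OF arrowhead_mat_carrier X that j] by simp
  show "(arrowhead_mat m d p q \<delta> * X) $$ (i,j) = d i * X $$ (i,j) + p i * X $$ (m,j)" if i: "i < m"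
  proof -
    have "(\<Sum>l<m. arrowhead_mat m d p q \<delta> $$ (i,l) * X $$ (l,j)) = (\<Sum>l<m. if l = i then d i * X $$ (i,j) else 0)"
      by (rule sum.cong) (use i in \<open>auto simp: mat_diag_def\<close>)
    then show ?thesis
      using prod[of i] i by (auto simp: mat_diag_def)
  qed
  have "(\<Sum>l<m. arrowhead_mat m d p q \<delta> $$ (m,l) * X $$ (l,j)) = (\<Sum>l<m. q l * X $$ (l,j))"
    by (rule sum.cong) (auto simp: mat_diag_def)
  then show "(arrowhead_mat m d p q \<delta> * X) $$ (m,j) = (\<Sum>l<m. q l * X $$ (l,j)) + \<delta> * X $$ (m,j)"
    using prod[of m] by (auto simp: mat_diag_def)
qed

lemma mult_arrowhead_mat_index:
  fixes d p q :: "nat \<Rightarrow> 'a::comm_ring_1"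
  assumes X: "X \<in> carrier_mat n (m+1)" and j: "j < n" and i: "i < m"
  shows "(X * arrowhead_mat m d p q \<delta>) $$ (j,i) = X $$ (j,i) * d i + X $$ (j,m) * q i"
proof -
  have "(\<Sum>l<m. X $$ (j,l) * arrowhead_mat m d p q \<delta> $$ (l,i)) = (\<Sum>l<m. if l = i then X $$ (j,i) * d i else 0)"
    by (rule sum.cong) (use i in \<open>auto simp: mat_diag_def\<close>)
  then show ?thesis
    using index_mult_mat_sum[OF X arrowhead_mat_carrier j, of i] i by (auto simp: mat_diag_def)
qed

lemma arrowhead_right_eigvecs:
  fixes d lam p q :: "nat \<Rightarrow> complex"
  assumes d_lam: "\<forall>i<m. \<forall>j<m+1. d i \<noteq> lam j"
    and P: "P \<in> carrier_mat (m+1) (m+1)"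
    and eig: "arrowhead_mat m d p q \<delta> * P = P * mat_diag (m+1) lam"
  shows "P = arrowhead_Zinv m d lam p * mat_diag (m+1) (\<lambda>j. P $$ (m,j))"
proof -
  let ?Z = "arrowhead_Zinv m d lam p"
  define a where "a j = P $$ (m,j)" for j
  have Z: "?Z \<in> carrier_mat (m+1) (m+1)" by (rule arrowhead_Zinv_carrier)
  have "P $$ (i,j) = ?Z $$ (i,j) * a j" if ij: "i < m+1" "j < m+1" for i j
  proof (cases "i < m")
    case True
    have "d i * P $$ (i,j) + p i * a j = P $$ (i,j) * lam j"
      using arg_cong[OF eig, of "\<lambda>X. X $$ (i,j)"] arrowhead_mat_mult_index(1)[OF P ij(2) True]
        mat_diag_mult_right[OF P] ij unfolding a_def by simp
    moreover have "d i - lam j \<noteq> 0" using d_lam True ij by auto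
    ultimately show ?thesis
      using True arrowhead_Zinv_index[OF ij] by (simp add: field_simps)
  qed (use ij arrowhead_Zinv_index[OF ij] in \<open>simp add: a_def less_Suc_eq\<close>)
  then show ?thesis
    unfolding mat_diag_mult_right[OF Z] a_def[symmetric] using P by (intro eq_matI) auto
qed

lemma arrowhead_left_eigvecs:
  fixes d lam p q :: "nat \<Rightarrow> complex"
  assumes d_lam: "\<forall>i<m. \<forall>j<m+1. d i \<noteq> lam j"
    and Q: "Q \<in> carrier_mat (m+1) (m+1)"
    and eig: "Q * arrowhead_mat m d p q \<delta> = mat_diag (m+1) lam * Q"
  shows "Q = mat_diag (m+1) (\<lambda>j. Q $$ (j,m)) * arrowhead_W m d lam q"
proof -
  let ?W = "arrowhead_W m d lam q"
  define b where "b j = Q $$ (j,m)" for j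
  have W: "?W \<in> carrier_mat (m+1) (m+1)" by (rule arrowhead_W_carrier)
  have "Q $$ (j,i) = b j * ?W $$ (j,i)" if ji: "j < m+1" "i < m+1" for j i
  proof (cases "i < m")
    case True
    have "Q $$ (j,i) * d i + b j * q i = lam j * Q $$ (j,i)"
      using arg_cong[OF eig, of "\<lambda>X. X $$ (j,i)"] mult_arrowhead_mat_index[OF Q ji(1) True]
        mat_diag_mult_left[OF Q] ji unfolding b_def by simp
    moreover have "lam j - d i \<noteq> 0" using d_lam True ji by (metis eq_iff_diff_eq_0)
    ultimately show ?thesis
      using True arrowhead_W_index[OF ji] by (simp add: field_simps)
  qed (use ji arrowhead_W_index[OF ji] in \<open>simp add: b_def less_Suc_eq\<close>)
  then show ?thesis
    unfolding mat_diag_mult_left[OF W] b_def[symmetric] using Q by (intro eq_matI) auto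
qed

lemma arrowhead_Zinv_secular:
  fixes d lam p q :: "nat \<Rightarrow> complex"
  assumes eig: "arrowhead_mat m d p q \<delta> * arrowhead_Zinv m d lam p = arrowhead_Zinv m d lam p * mat_diag (m+1) lam"
    and k: "k < m+1"
  shows "(\<Sum>i<m. p i * q i / (lam k - d i)) = lam k - \<delta>"
proof -
  let ?Z = "arrowhead_Zinv m d lam p"
  have Z: "?Z \<in> carrier_mat (m+1) (m+1)" by (rule arrowhead_Zinv_carrier)
  have "(\<Sum>l<m. q l * ?Z $$ (l,k)) + \<delta> = lam k"
    using arg_cong[OF eig, of "\<lambda>X. X $$ (m,k)"] arrowhead_mat_mult_index(2)[OF Z k]
      mat_diag_mult_right[OF Z] arrowhead_Zinv_index[of m m k] k by simp
  moreover have "(\<Sum>l<m. q l * ?Z $$ (l,k)) = (\<Sum>i<m. p i * q i / (lam k - d i))"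
  proof (rule sum.cong)
    fix i assume "i \<in> {..<m}"
    then show "q i * ?Z $$ (i,k) = p i * q i / (lam k - d i)"
      using arrowhead_Zinv_index[of i m k] k by (simp add: divide_minus_right[symmetric])
  qed simp
  ultimately show ?thesis by (simp add: eq_diff_eq)
qed

lemma similar_mat_wit_mult_eq:
  fixes A :: "'a::comm_ring_1 mat"
  assumes "{A, B, P, Q} \<subseteq> carrier_mat n n" "P * Q = 1\<^sub>m n" "Q * P = 1\<^sub>m n" "A = P * B * Q"
  shows "A * P = P * B" and "Q * A = B * Q"
proof -
  from assms(1) have A: "A \<in> carrier_mat n n" and B: "B \<in> carrier_mat n n"
    and P: "P \<in> carrier_mat n n" and Q: "Q \<in> carrier_mat n n" by auto
  have "A * P = P * B * (Q * P)"
    unfolding assms(4) by (rule assoc_mult_mat[OF mult_carrier_mat[OF P B] Q P])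
  then show "A * P = P * B" using assms(3) P B by simp
  have "Q * A = Q * (P * B) * Q"
    unfolding assms(4) by (rule assoc_mult_mat[OF Q mult_carrier_mat[OF P B] Q, symmetric])
  also have "Q * (P * B) = (Q * P) * B"
    by (rule assoc_mult_mat[OF Q P B, symmetric])
  finally show "Q * A = B * Q" using assms(3) B Q by simp
qed

lemma arrowhead_similar_diag:
  fixes d lam p q :: "nat \<Rightarrow> complex"
  assumes d_lam: "\<forall>i<m. \<forall>j<m+1. d i \<noteq> lam j"
    and sim: "similar_mat (arrowhead_mat m d p q \<delta>) (mat_diag (m+1) lam)"
  obtains c where "\<forall>j<m+1. c j \<noteq> 0" "arrowhead_Pi m d lam p q = mat_diag (m+1) c"
    and "arrowhead_mat m d p q \<delta> * arrowhead_Zinv m d lam p = arrowhead_Zinv m d lam p * mat_diag (m+1) lam"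
proof -
  let ?A = "arrowhead_mat m d p q \<delta>" and ?L = "mat_diag (m+1) lam"
  let ?Z = "arrowhead_Zinv m d lam p" and ?W = "arrowhead_W m d lam q"
  have Z: "?Z \<in> carrier_mat (m+1) (m+1)" and W: "?W \<in> carrier_mat (m+1) (m+1)"
    by (rule arrowhead_Zinv_carrier arrowhead_W_carrier)+
  from similar_matD[OF sim] obtain n P Q where wit: "{?A, ?L, P, Q} \<subseteq> carrier_mat n n"
    "P * Q = 1\<^sub>m n" "Q * P = 1\<^sub>m n" "?A = P * ?L * Q" by blast
  have n: "n = m+1" using wit(1) arrowhead_mat_carrier[of m d p q \<delta>] by auto
  have P: "P \<in> carrier_mat (m+1) (m+1)" and Q: "Q \<in> carrier_mat (m+1) (m+1)"
    using wit(1) n by auto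
  define a where "a j = P $$ (m,j)" for j
  define b where "b j = Q $$ (j,m)" for j
  have P_eq: "P = ?Z * mat_diag (m+1) a"
    unfolding a_def using arrowhead_right_eigvecs[OF d_lam P] similar_mat_wit_mult_eq(1)[OF wit] n by blast
  have Q_eq: "Q = mat_diag (m+1) b * ?W"
    unfolding b_def using arrowhead_left_eigvecs[OF d_lam Q] similar_mat_wit_mult_eq(2)[OF wit] n by blast
  have Da: "mat_diag (m+1) a \<in> carrier_mat (m+1) (m+1)"
    and Db: "mat_diag (m+1) b \<in> carrier_mat (m+1) (m+1)" by (rule mat_diag_dim)+
  have "1\<^sub>m (m+1) = Q * P" using wit(3) n by simp
  also have "\<dots> = mat_diag (m+1) b * ?W * ?Z * mat_diag (m+1) a"
    unfolding P_eq Q_eq by (rule assoc_mult_mat[OF mult_carrier_mat[OF Db W] Z Da, symmetric])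
  also have "mat_diag (m+1) b * ?W * ?Z = mat_diag (m+1) b * arrowhead_Pi m d lam p q"
    unfolding arrowhead_Pi_eq_W_Zinv by (rule assoc_mult_mat[OF Db W Z])
  finally have sandwich: "mat_diag (m+1) b * arrowhead_Pi m d lam p q * mat_diag (m+1) a = 1\<^sub>m (m+1)"
    by (rule sym)
  have ab: "\<forall>j<m+1. a j \<noteq> 0 \<and> b j \<noteq> 0"
    using diag_sandwich_eq_one(2)[OF arrowhead_Pi_carrier sandwich] .
  have "?A * (?Z * mat_diag (m+1) a) = ?Z * mat_diag (m+1) a * ?L"
    by (fold P_eq) (rule similar_mat_wit_mult_eq(1)[OF wit])
  then have "?A * ?Z = ?Z * ?L"
    by (rule eigvecs_mult_mat_diag_cancel[OF arrowhead_mat_carrier Z]) (use ab in blast)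
  then show ?thesis
    using that[of "\<lambda>j. inverse (a j * b j)"] diag_sandwich_eq_one(1)[OF arrowhead_Pi_carrier sandwich] ab
    by simp
qed

lemma arrowhead_Pi_diag_index:
  assumes "j < m+1"
  shows "arrowhead_Pi m d lam p q $$ (j,j) = 1 + (\<Sum>i<m. p i * q i / (lam j - d i)^2)"
proof -
  have "q i / (lam j - d i) * (- p i / (d i - lam j)) = p i * q i / (lam j - d i)^2" for i
    by (simp add: power2_eq_square divide_minus_right[symmetric])
  then show ?thesis using arrowhead_Pi_index[OF assms assms] by simp
qed

lemma arrowhead_Pi_diag_index_spectral:
  fixes d lam p q :: "nat \<Rightarrow> complex"
  assumes inj_d: "inj_on d {..<m}" and inj_lam: "inj_on lam {..<m+1}"
    and d_lam: "\<forall>i<m. \<forall>j<m+1. d i \<noteq> lam j"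
    and eig: "arrowhead_mat m d p q \<delta> * arrowhead_Zinv m d lam p = arrowhead_Zinv m d lam p * mat_diag (m+1) lam"
    and j: "j < m+1"
  shows "arrowhead_Pi m d lam p q $$ (j,j) = 1 - (\<Sum>i<m. (\<Prod>k<m+1. d i - lam k)
           / ((lam j - d i)^2 * (\<Prod>k\<in>{..<m} - {i}. d i - d k)))"
proof -
  have "p i * q i / (lam j - d i)^2
      = - ((\<Prod>k<m+1. d i - lam k) / ((lam j - d i)^2 * (\<Prod>k\<in>{..<m} - {i}. d i - d k)))"
    if i: "i < m" for i
    using secular_equation_residue[OF inj_d inj_lam d_lam arrowhead_Zinv_secular[OF eig] i]
    by (simp add: mult.commute)
  then have "(\<Sum>i<m. p i * q i / (lam j - d i)^2)
      = - (\<Sum>i<m. (\<Prod>k<m+1. d i - lam k) / ((lam j - d i)^2 * (\<Prod>k\<in>{..<m} - {i}. d i - d k)))"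
    unfolding sum_negf[symmetric] by (intro sum.cong) auto
  then show ?thesis
    unfolding arrowhead_Pi_diag_index[OF j] by simp
qed

lemma arrowhead_diagonalization:
  fixes d lam p q :: "nat \<Rightarrow> complex"
  assumes Pinv: "Pinv \<in> carrier_mat (m+1) (m+1)" and inv: "Pinv * arrowhead_Pi m d lam p q = 1\<^sub>m (m+1)"
    and eig: "arrowhead_mat m d p q \<delta> * arrowhead_Zinv m d lam p = arrowhead_Zinv m d lam p * mat_diag (m+1) lam"
  shows "Pinv * arrowhead_W m d lam q * arrowhead_Zinv m d lam p = 1\<^sub>m (m+1)"
    and "arrowhead_Zinv m d lam p * (Pinv * arrowhead_W m d lam q) = 1\<^sub>m (m+1)"
    and "arrowhead_mat m d p q \<delta> = arrowhead_Zinv m d lam p * mat_diag (m+1) lam * (Pinv * arrowhead_W m d lam q)"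
proof -
  have W: "arrowhead_W m d lam q \<in> carrier_mat (m+1) (m+1)" by (rule arrowhead_W_carrier)
  have Z: "arrowhead_Zinv m d lam p \<in> carrier_mat (m+1) (m+1)" by (rule arrowhead_Zinv_carrier)
  show left: "Pinv * arrowhead_W m d lam q * arrowhead_Zinv m d lam p = 1\<^sub>m (m+1)"
    using inv unfolding arrowhead_Pi_eq_W_Zinv assoc_mult_mat[OF Pinv W Z] .
  show right: "arrowhead_Zinv m d lam p * (Pinv * arrowhead_W m d lam q) = 1\<^sub>m (m+1)"
    by (rule mat_mult_left_right_inverse[OF mult_carrier_mat[OF Pinv W] Z left])
  show "arrowhead_mat m d p q \<delta> = arrowhead_Zinv m d lam p * mat_diag (m+1) lam * (Pinv * arrowhead_W m d lam q)"
    by (rule similar_of_eigvec_basis[OF arrowhead_mat_carrier Z mult_carrier_mat[OF Pinv W] eig right])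
qed

theorem mainTheorem2:
  fixes m :: nat and d lam p q :: "nat \<Rightarrow> complex" and \<delta> :: complex
  assumes "m \<ge> 1"
    and "inj_on d {..<m}"
    and "inj_on lam {..<m+1}"
    and "\<forall>i<m. \<forall>j<m+1. d i \<noteq> lam j"
    and "similar_mat
           (four_block_mat (mat_diag m d) (mat m 1 (\<lambda>(i,_). p i))
                           (mat 1 m (\<lambda>(_,j). q j)) (mat 1 1 (\<lambda>_. \<delta>)))
           (mat_diag (m+1) lam)"
  shows "let A = four_block_mat (mat_diag m d) (mat m 1 (\<lambda>(i,_). p i))
                   (mat 1 m (\<lambda>(_,j). q j)) (mat 1 1 (\<lambda>_. \<delta>));
             LL = mat_diag (m+1) lam;
             Zinv = stack_rows (- (mat_diag m p * cauchy_mat m (m+1) d lam)) (ones_mat 1 (m+1));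
             PP = - (cauchy_mat (m+1) m lam d * mat_diag m q * mat_diag m p * cauchy_mat m (m+1) d lam)
                  + ones_mat (m+1) (m+1)
         in PP \<in> carrier_mat (m+1) (m+1) \<and> diagonal_mat PP
            \<and> (\<forall>j<m+1. PP $$ (j,j) = 1 + (\<Sum>i<m. p i * q i / (lam j - d i)^2))
            \<and> (\<forall>j<m+1. PP $$ (j,j) = 1 - (\<Sum>i<m. (\<Prod>k<m+1. d i - lam k)
                         / ((lam j - d i)^2 * (\<Prod>k\<in>{..<m} - {i}. d i - d k))))
            \<and> invertible_mat PP \<and> invertible_mat Zinv
            \<and> (\<forall>Pinv. Pinv \<in> carrier_mat (m+1) (m+1) \<and> PP * Pinv = 1\<^sub>m (m+1) \<and> Pinv * PP = 1\<^sub>m (m+1) \<longrightarrow>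
                 (let Z = Pinv * stack_cols (cauchy_mat (m+1) m lam d * mat_diag m q) (ones_mat (m+1) 1)
                  in Zinv * Z = 1\<^sub>m (m+1) \<and> Z * Zinv = 1\<^sub>m (m+1) \<and> A = Zinv * LL * Z))"
proof -
  obtain c where c: "\<forall>j<m+1. c j \<noteq> 0" and Pi: "arrowhead_Pi m d lam p q = mat_diag (m+1) c"
    and eig: "arrowhead_mat m d p q \<delta> * arrowhead_Zinv m d lam p = arrowhead_Zinv m d lam p * mat_diag (m+1) lam"
    using arrowhead_similar_diag[OF assms(4,5)] by blast
  let ?Pi_inv = "mat_diag (m+1) (\<lambda>j. inverse (c j))"
  have Pi_inv: "?Pi_inv * arrowhead_Pi m d lam p q = 1\<^sub>m (m+1)" "arrowhead_Pi m d lam p q * ?Pi_inv = 1\<^sub>m (m+1)"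
    unfolding Pi using mat_diag_mult_inverse[OF c] by simp_all
  show ?thesis
    unfolding Let_def
  proof (intro conjI allI impI)
    show "diagonal_mat (arrowhead_Pi m d lam p q)"
      unfolding Pi diagonal_mat_def by (simp add: mat_diag_def)
    show "invertible_mat (arrowhead_Pi m d lam p q)"
      by (rule invertible_mat_if_right_inverse[OF arrowhead_Pi_carrier mat_diag_dim Pi_inv(2)])
    show "invertible_mat (arrowhead_Zinv m d lam p)"
      by (rule invertible_mat_if_right_inverse[OF arrowhead_Zinv_carrier
            mult_carrier_mat[OF mat_diag_dim arrowhead_W_carrier] arrowhead_diagonalization(2)[OF mat_diag_dim Pi_inv(1) eig]])
    fix Pinv assume "Pinv \<in> carrier_mat (m+1) (m+1) \<and> arrowhead_Pi m d lam p q * Pinv = 1\<^sub>m (m+1)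
      \<and> Pinv * arrowhead_Pi m d lam p q = 1\<^sub>m (m+1)"
    then have "Pinv \<in> carrier_mat (m+1) (m+1)" "Pinv * arrowhead_Pi m d lam p q = 1\<^sub>m (m+1)" by auto
    from arrowhead_diagonalization[OF this eig]
    show "Pinv * arrowhead_W m d lam q * arrowhead_Zinv m d lam p = 1\<^sub>m (m+1)"
      and "arrowhead_Zinv m d lam p * (Pinv * arrowhead_W m d lam q) = 1\<^sub>m (m+1)"
      and "arrowhead_mat m d p q \<delta> = arrowhead_Zinv m d lam p * mat_diag (m+1) lam * (Pinv * arrowhead_W m d lam q)"
      by blast+
  qed (use arrowhead_Pi_carrier arrowhead_Pi_diag_index arrowhead_Pi_diag_index_spectral[OF assms(2-4) eig] in blast)+
qed

end
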